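(* For every even integer $n\ge 4$, $\chi_{ei}(C_3\square C_n)=6$.
   Context: All graphs are finite and simple. $C_k$ denotes the cycle on $k$ vertices. A path $P_4$ in $G$ is a sequence $uxyv$ of four distinct vertices with $ux,xy,yv\in E(G)$; $u,v$ are its end vertices. An $e$-injective $k$-coloring of $G$ is a function $f:V(G)\to\{1,\dots,k\}$ with $f(u)\ne f(v)$ whenever $u,v$ are the end vertices of some path $P_4$ in $G$; $\chi_{ei}(G)$ is the least such $k$. In the Cartesian product $G\square H$ two vertices are adjacent if they are adjacent in one coordinate and equal in the other. *)

theory Defs
  imports Main
begin

text \<open>A finite simple graph is given by a vertex set V and a symmetric irreflexive
  adjacency relation E on V.\<close>

definition cycle_verts :: "nat \<Rightarrow> nat set" where
  "cycle_verts k = {0..<k}"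

definition cycle_adj :: "nat \<Rightarrow> nat \<Rightarrow> nat \<Rightarrow> bool" where
  "cycle_adj k i j \<longleftrightarrow> i < k \<and> j < k \<and> (j = (i + 1) mod k \<or> i = (j + 1) mod k)"

definition box_verts :: "'a set \<Rightarrow> 'b set \<Rightarrow> ('a \<times> 'b) set" where
  "box_verts V1 V2 = V1 \<times> V2"

definition box_adj :: "'a set \<Rightarrow> ('a \<Rightarrow> 'a \<Rightarrow> bool) \<Rightarrow> 'b set \<Rightarrow> ('b \<Rightarrow> 'b \<Rightarrow> bool)
    \<Rightarrow> 'a \<times> 'b \<Rightarrow> 'a \<times> 'b \<Rightarrow> bool" where
  "box_adj V1 E1 V2 E2 p q \<longleftrightarrow> p \<in> V1 \<times> V2 \<and> q \<in> V1 \<times> V2 \<and>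
     ((E1 (fst p) (fst q) \<and> snd p = snd q) \<or> (fst p = fst q \<and> E2 (snd p) (snd q)))"

definition P4_ends :: "'a set \<Rightarrow> ('a \<Rightarrow> 'a \<Rightarrow> bool) \<Rightarrow> 'a \<Rightarrow> 'a \<Rightarrow> bool" where
  "P4_ends V E u v \<longleftrightarrow> (\<exists>x y. u \<in> V \<and> x \<in> V \<and> y \<in> V \<and> v \<in> V \<and>
      distinct [u, x, y, v] \<and> E u x \<and> E x y \<and> E y v)"

definition e_injective_coloring :: "'a set \<Rightarrow> ('a \<Rightarrow> 'a \<Rightarrow> bool) \<Rightarrow> nat \<Rightarrow> ('a \<Rightarrow> nat) \<Rightarrow> bool" where
  "e_injective_coloring V E k f \<longleftrightarrow>
     (\<forall>v\<in>V. f v \<in> {1..k}) \<and> (\<forall>u v. P4_ends V E u v \<longrightarrow> f u \<noteq> f v)"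

definition chi_ei :: "'a set \<Rightarrow> ('a \<Rightarrow> 'a \<Rightarrow> bool) \<Rightarrow> nat" where
  "chi_ei V E = (LEAST k. \<exists>f. e_injective_coloring V E k f)"

end

theory Submission
  imports Defs
begin

text \<open>Colour the vertex (a, i) of C_3 \<box> C_n by the pair (a, parity of i); this needs six
  colours. Every edge of the product either moves in the C_3 coordinate or flips the parity
  of the C_n coordinate, so along a path u x y v whose ends get the same colour the parity
  flips an even number of times: with no flip all four vertices lie in one copy of C_3 and
  u = v, with two flips the single C_3 move changes the first coordinate. Conversely, any two
  of the six vertices of C_3 \<box> K_2 are the ends of a P_4, so an e-injective colouring is
  injective on them. Both arguments only use that C_3 is a triangle and C_n is bipartite
  with an edge.\<close>

lemma chi_ei_eqI:
  assumes "\<exists>f. e_injective_coloring V E k f"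
    and "\<And>k' f. e_injective_coloring V E k' f \<Longrightarrow> k \<le> k'"
  shows "chi_ei V E = k"
  unfolding chi_ei_def
  by (rule Least_equality) (use assms in auto)

lemma e_injective_coloring_card_le:
  assumes f: "e_injective_coloring V E k f"
    and S: "S \<subseteq> V" "\<And>u v. u \<in> S \<Longrightarrow> v \<in> S \<Longrightarrow> u \<noteq> v \<Longrightarrow> P4_ends V E u v"
  shows "card S \<le> k"
proof -
  have "inj_on f S"
  proof (rule inj_onI, rule ccontr)
    fix u v assume "u \<in> S" "v \<in> S" "f u = f v" "u \<noteq> v"
    with f S(2) show False
      unfolding e_injective_coloring_def by blast
  qed
  moreover have "f ` S \<subseteq> {1..k}"
    using f S(1) unfolding e_injective_coloring_def by blast
  ultimately have "card S \<le> card {1..k}"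
    by (rule card_inj_on_le) simp
  then show ?thesis by simp
qed

lemma cycle_adj_sym: "cycle_adj k i j \<longleftrightarrow> cycle_adj k j i"
  unfolding cycle_adj_def by blast

lemma cycle_adj_irrefl:
  assumes "2 \<le> k"
  shows "\<not> cycle_adj k i i"
proof
  assume "cycle_adj k i i"
  then have "i < k" "i = (i + 1) mod k"
    unfolding cycle_adj_def by auto
  moreover have "(i + 1) mod k \<noteq> i" if "i < k"
  proof (cases "i + 1 = k")
    case True
    with assms show ?thesis by simp
  next
    case False
    with that show ?thesis by simp
  qed
  ultimately show False by simp
qed

lemma cycle_adj_parity:
  assumes "even k" "cycle_adj k i j"
  shows "even i \<longleftrightarrow> odd j"
proof -
  have succ: "even i \<longleftrightarrow> odd ((i + 1) mod k)" if "i < k" for i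
  proof (cases "i + 1 = k")
    case True
    with \<open>even k\<close> have "odd i" by (metis even_plus_one_iff)
    with True show ?thesis by simp
  next
    case False
    with that show ?thesis by simp
  qed
  from assms(2) have "i < k" "j < k" "j = (i + 1) mod k \<or> i = (j + 1) mod k"
    unfolding cycle_adj_def by auto
  then show ?thesis
    using succ[of i] succ[of j] by blast
qed

lemma cycle_adj_3_complete:
  assumes "a < 3" "b < 3" "a \<noteq> b"
  shows "cycle_adj 3 a b"
proof -
  from assms have "a \<in> {0, 1, 2}" "b \<in> {0, 1, 2}" by auto
  with \<open>a \<noteq> b\<close> show ?thesis
    unfolding cycle_adj_def by auto
qed

lemma cycle_adj_0_1: "2 \<le> k \<Longrightarrow> cycle_adj k 0 1"
  unfolding cycle_adj_def by simp

lemma box_P4_ends_separated: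
  fixes h :: "'b \<Rightarrow> bool"
  assumes "P4_ends (box_verts V1 V2) (box_adj V1 E1 V2 E2) u v"
    and irrefl: "\<And>a. \<not> E1 a a" and bipartite: "\<And>i j. E2 i j \<Longrightarrow> h i \<noteq> h j"
  shows "(fst u, h (snd u)) \<noteq> (fst v, h (snd v))"
proof
  assume same: "(fst u, h (snd u)) = (fst v, h (snd v))"
  from assms(1) obtain x y where "u \<noteq> v"
    and steps: "box_adj V1 E1 V2 E2 u x" "box_adj V1 E1 V2 E2 x y" "box_adj V1 E1 V2 E2 y v"
    unfolding P4_ends_def by auto
  have step: "fst p \<noteq> fst q \<and> snd p = snd q \<or> fst p = fst q \<and> h (snd p) \<noteq> h (snd q)"
    if "box_adj V1 E1 V2 E2 p q" for p q
    using that irrefl bipartite unfolding box_adj_def by auto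
  from step[OF steps(1)] step[OF steps(2)] step[OF steps(3)] \<open>u \<noteq> v\<close> same show False
    by (auto simp: prod_eq_iff)
qed

lemma box_e_injective_coloring_exists:
  fixes h :: "'b \<Rightarrow> bool"
  assumes "finite V1" and irrefl: "\<And>a. \<not> E1 a a"
    and bipartite: "\<And>i j. E2 i j \<Longrightarrow> h i \<noteq> h j"
  shows "\<exists>f. e_injective_coloring (box_verts V1 V2) (box_adj V1 E1 V2 E2) (2 * card V1) f"
proof -
  let ?C = "V1 \<times> (UNIV :: bool set)"
  have "finite ?C" and "card ?C = card {1..2 * card V1}"
    using \<open>finite V1\<close> by (simp_all add: card_cartesian_product)
  from finite_same_card_bij[OF this(1) finite_atLeastAtMost this(2)]
  obtain g where g: "bij_betw g ?C {1..2 * card V1}" ..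
  define f where "f p = g (fst p, h (snd p))" for p
  have "f v \<in> {1..2 * card V1}" if "v \<in> box_verts V1 V2" for v
  proof -
    have "(fst v, h (snd v)) \<in> ?C"
      using that unfolding box_verts_def by auto
    then show ?thesis
      unfolding f_def by (rule bij_betw_apply[OF g])
  qed
  moreover have "f u \<noteq> f v"
    if uv: "P4_ends (box_verts V1 V2) (box_adj V1 E1 V2 E2) u v" for u v
  proof -
    have "(fst u, h (snd u)) \<in> ?C" "(fst v, h (snd v)) \<in> ?C"
      using uv unfolding P4_ends_def box_verts_def by auto
    with bij_betw_imp_inj_on[OF g]
    have "f u = f v \<Longrightarrow> (fst u, h (snd u)) = (fst v, h (snd v))"
      unfolding f_def by (blast dest: inj_onD)
    with box_P4_ends_separated[where h = h, OF uv irrefl bipartite] show ?thesis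
      by blast
  qed
  ultimately show ?thesis
    unfolding e_injective_coloring_def by blast
qed

lemma card_ge_3_obtains_other:
  assumes "3 \<le> card T"
  obtains c where "c \<in> T" "c \<noteq> a" "c \<noteq> b"
proof -
  have "\<not> T \<subseteq> {a, b}"
    using assms card_mono[of "{a, b}" T] card_insert_le_m1[of 2 "{b}" a] by fastforce
  then show ?thesis using that by blast
qed

lemma box_clique_edge_P4_ends:
  assumes T: "T \<subseteq> V1" "3 \<le> card T" "\<And>a b. a \<in> T \<Longrightarrow> b \<in> T \<Longrightarrow> a \<noteq> b \<Longrightarrow> E1 a b"
    and edge: "i \<in> V2" "j \<in> V2" "i \<noteq> j" "E2 i j" "E2 j i"
    and uv: "u \<in> T \<times> {i, j}" "v \<in> T \<times> {i, j}" "u \<noteq> v"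
  shows "P4_ends (box_verts V1 V2) (box_adj V1 E1 V2 E2) u v"
proof -
  obtain a p b q where u: "u = (a, p)" and v: "v = (b, q)"
    and in_T: "a \<in> T" "b \<in> T" and layers: "p \<in> {i, j}" "q \<in> {i, j}"
    using uv by blast
  have V: "(c, r) \<in> box_verts V1 V2" if "c \<in> T" "r \<in> {i, j}" for c r
    using that T(1) edge unfolding box_verts_def by blast
  have vertical: "box_adj V1 E1 V2 E2 (c, r) (c, s)"
    if "c \<in> T" "r \<in> {i, j}" "s \<in> {i, j}" "r \<noteq> s" for c r s
    using that V edge unfolding box_adj_def box_verts_def by auto
  have horizontal: "box_adj V1 E1 V2 E2 (c, r) (d, r)"
    if "c \<in> T" "d \<in> T" "c \<noteq> d" "r \<in> {i, j}" for c d r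
    using that V T(3) unfolding box_adj_def box_verts_def by auto
  show ?thesis
  proof (cases "p = q")
    case True
    define p' where "p' = (if p = i then j else i)"
    have "p' \<in> {i, j}" "p' \<noteq> p"
      using layers edge(3) unfolding p'_def by auto
    then show ?thesis
      unfolding P4_ends_def u v using True uv(3) u v in_T layers V vertical horizontal
      by (intro exI[of _ "(a, p')"] exI[of _ "(b, p')"]) auto
  next
    case False
    obtain c where "c \<in> T" "c \<noteq> a" "c \<noteq> b"
      using card_ge_3_obtains_other[OF T(2)] .
    then show ?thesis
      unfolding P4_ends_def u v using False in_T layers V vertical horizontal
      by (intro exI[of _ "(c, p)"] exI[of _ "(c, q)"]) auto
  qed
qed

lemma box_clique_edge_colors_ge:
  assumes f: "e_injective_coloring (box_verts V1 V2) (box_adj V1 E1 V2 E2) k f"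
    and T: "T \<subseteq> V1" "3 \<le> card T" "\<And>a b. a \<in> T \<Longrightarrow> b \<in> T \<Longrightarrow> a \<noteq> b \<Longrightarrow> E1 a b"
    and edge: "i \<in> V2" "j \<in> V2" "i \<noteq> j" "E2 i j" "E2 j i"
  shows "2 * card T \<le> k"
proof -
  have "card (T \<times> {i, j}) \<le> k"
  proof (rule e_injective_coloring_card_le[OF f])
    show "T \<times> {i, j} \<subseteq> box_verts V1 V2"
      using T(1) edge(1,2) unfolding box_verts_def by blast
  qed (rule box_clique_edge_P4_ends[OF T edge])
  then show ?thesis
    using edge(3) by (simp add: card_cartesian_product)
qed

theorem theorem4p6:
  fixes n :: nat
  assumes "even n" and "n \<ge> 4"
  shows "chi_ei (box_verts (cycle_verts 3) (cycle_verts n))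
                (box_adj (cycle_verts 3) (cycle_adj 3) (cycle_verts n) (cycle_adj n)) = 6"
proof (rule chi_ei_eqI)
  have "\<exists>f. e_injective_coloring (box_verts (cycle_verts 3) (cycle_verts n))
                (box_adj (cycle_verts 3) (cycle_adj 3) (cycle_verts n) (cycle_adj n))
                (2 * card (cycle_verts 3)) f"
  proof (rule box_e_injective_coloring_exists[where h = even])
    show "finite (cycle_verts 3)" "\<not> cycle_adj 3 a a" for a
      using cycle_adj_irrefl by (simp_all add: cycle_verts_def)
    show "even i \<noteq> even j" if "cycle_adj n i j" for i j
      using cycle_adj_parity[OF \<open>even n\<close> that] by simp
  qed
  then show "\<exists>f. e_injective_coloring (box_verts (cycle_verts 3) (cycle_verts n))
                (box_adj (cycle_verts 3) (cycle_adj 3) (cycle_verts n) (cycle_adj n)) 6 f"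
    by (simp add: cycle_verts_def)
next
  fix k f
  assume f: "e_injective_coloring (box_verts (cycle_verts 3) (cycle_verts n))
                (box_adj (cycle_verts 3) (cycle_adj 3) (cycle_verts n) (cycle_adj n)) k f"
  have "2 * card (cycle_verts 3) \<le> k"
  proof (rule box_clique_edge_colors_ge[OF f, where i = 0 and j = 1])
    show "cycle_adj 3 a b" if "a \<in> cycle_verts 3" "b \<in> cycle_verts 3" "a \<noteq> b" for a b
      using that cycle_adj_3_complete by (simp add: cycle_verts_def)
    show "cycle_adj n 0 1" "cycle_adj n 1 0"
      using cycle_adj_0_1 cycle_adj_sym \<open>n \<ge> 4\<close> by auto
  qed (use \<open>n \<ge> 4\<close> in \<open>auto simp: cycle_verts_def\<close>)
  then show "6 \<le> k"
    by (simp add: cycle_verts_def)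
qed

end
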